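(* For every integer $k\ge 2$, $$\sum_{n\geq 0}C_{\Pi_{n,k}}(x)\,t^{n}=\frac{1}{1-\bigl(k+(k-1)x\bigr)t-(1+x)t^{2}}.$$
   Context: For an integer $k\ge 2$, a $k$-Pell string is a finite word over the alphabet $\{0,1,\ldots,k-1,kk\}$, i.e. a word over $\{0,1,\ldots,k\}$ in which every maximal run of the letter $k$ has even length. For $n\ge 0$, the $k$-Pell graph $\Pi_{n,k}$ has as vertices all $k$-Pell strings of length $n$, and two vertices are adjacent if one is obtained from the other either by replacing a single letter $i$ by $i+1$ (or vice versa) for some $i\in\{0,1,\ldots,k-2\}$, or by replacing one factor $(k-1)(k-1)$ by $kk$ (or vice versa), in such a way that the resulting string is again a $k$-Pell string. The cube polynomial of a graph $G$ is $C_G(x)=\sum_{i\ge 0}c_i(G)x^i$, where $c_i(G)$ is the number of induced subgraphs of $G$ isomorphic to the hypercube $Q_i$. *)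

theory Defs
  imports "HOL-Computational_Algebra.Polynomial" "HOL-Computational_Algebra.Formal_Power_Series"
begin

text \<open>k-Pell strings of length n: words over the alphabet {0,...,k-1,kk},
  i.e. concatenations of blocks [i] (i < k) and [k,k].\<close>
definition pell_block :: "nat \<Rightarrow> nat list \<Rightarrow> bool" where
  "pell_block k b \<longleftrightarrow> (\<exists>i<k. b = [i]) \<or> b = [k, k]"

definition pell_strings :: "nat \<Rightarrow> nat \<Rightarrow> nat list set" where
  "pell_strings n k = {w. length w = n \<and>
      (\<exists>bs. w = concat bs \<and> (\<forall>b\<in>set bs. pell_block k b))}"

definition pell_step :: "nat \<Rightarrow> nat list \<Rightarrow> nat list \<Rightarrow> bool" where
  "pell_step k u v \<longleftrightarrow>
     (\<exists>a b i. i \<le> k - 2 \<and> u = a @ [i] @ b \<and> v = a @ [Suc i] @ b) \<or>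
     (\<exists>a b. u = a @ [k - 1, k - 1] @ b \<and> v = a @ [k, k] @ b)"

definition pell_adj :: "nat \<Rightarrow> nat list \<Rightarrow> nat list \<Rightarrow> bool" where
  "pell_adj k u v \<longleftrightarrow> pell_step k u v \<or> pell_step k v u"

definition cube_verts :: "nat \<Rightarrow> bool list set" where
  "cube_verts i = {w. length w = i}"

definition cube_adj :: "bool list \<Rightarrow> bool list \<Rightarrow> bool" where
  "cube_adj u v \<longleftrightarrow> length u = length v \<and>
      card {j. j < length u \<and> u ! j \<noteq> v ! j} = 1"

definition cube_count :: "'a set \<Rightarrow> ('a \<Rightarrow> 'a \<Rightarrow> bool) \<Rightarrow> nat \<Rightarrow> nat" where
  "cube_count V adj i = card {S. S \<subseteq> V \<and>
      (\<exists>f. bij_betw f (cube_verts i) S \<and>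
           (\<forall>u\<in>cube_verts i. \<forall>v\<in>cube_verts i. adj (f u) (f v) \<longleftrightarrow> cube_adj u v))}"

text \<open>Cube polynomial C_G(x) = sum_i c_i(G) x^i (for a finite graph, c_i = 0 for i > |V|).\<close>
definition cube_poly :: "'a set \<Rightarrow> ('a \<Rightarrow> 'a \<Rightarrow> bool) \<Rightarrow> int poly" where
  "cube_poly V adj = (\<Sum>i\<le>card V. monom (int (cube_count V adj i)) i)"

definition pell_cube_poly :: "nat \<Rightarrow> nat \<Rightarrow> int poly" where
  "pell_cube_poly n k = cube_poly (pell_strings n k) (pell_adj k)"

end

theory Submission
  imports Defs
begin

(*
  Replacing every block kk of a k-Pell string by the column pair (k, k-1) embeds the k-Pell
  strings of length n into the grid N^n and turns the edges of the Pell graph into exactly the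
  unit steps of the grid between image points: the Pell graph is an induced subgraph of the
  grid.

  Encode a grid point h by its set of cells {(p, j). j < h_p}; a unit step adds or removes one
  cell. An injective map F from the vertices J (subsets of {0..d-1}) of Q_d to sets that
  changes one element along every edge is a face: F(J) = F({}) xor c(J) for an injective c.
  Hence the induced hypercubes of an induced subgraph of the grid are exactly the boxes it
  contains, i.e. products of singletons {b} and unit intervals {b, b+1}, the dimension being the
  number of intervals.

  A box of Pell heights of length n starts with a letter coordinate {a} (a < k) or {a, a+1}
  (a + 1 < k) followed by a box of length n-1, or with a block coordinate {k} or {k-1, k}
  whose next coordinate is forced to be {k-1}, followed by a box of length n-2. So
  C_n = (k + (k-1) x) C_(n-1) + (1 + x) C_(n-2) with C_0 = 1 and C_1 = k + (k-1) x.
*)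

section \<open>Induced hypercubes\<close>

definition induced_cubes :: "'a set \<Rightarrow> ('a \<Rightarrow> 'a \<Rightarrow> bool) \<Rightarrow> nat \<Rightarrow> 'a set set" where
  "induced_cubes V adj d = {S. S \<subseteq> V \<and> (\<exists>f. bij_betw f (cube_verts d) S \<and>
      (\<forall>u\<in>cube_verts d. \<forall>v\<in>cube_verts d. adj (f u) (f v) \<longleftrightarrow> cube_adj u v))}"

lemma cube_count_eq_card_induced_cubes: "cube_count V adj d = card (induced_cubes V adj d)"
  by (simp add: cube_count_def induced_cubes_def)

lemma image_mem_induced_cubes:
  assumes "bij_betw \<phi> V W" "\<And>u v. u \<in> V \<Longrightarrow> v \<in> V \<Longrightarrow> adj' (\<phi> u) (\<phi> v) \<longleftrightarrow> adj u v"
    and "S \<in> induced_cubes V adj d"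
  shows "\<phi> ` S \<in> induced_cubes W adj' d"
proof -
  from assms(3) obtain f where S: "S \<subseteq> V" "bij_betw f (cube_verts d) S"
    and f: "\<forall>u\<in>cube_verts d. \<forall>v\<in>cube_verts d. adj (f u) (f v) \<longleftrightarrow> cube_adj u v"
    by (auto simp: induced_cubes_def)
  have "bij_betw (\<phi> \<circ> f) (cube_verts d) (\<phi> ` S)"
    using S bij_betw_subset[OF assms(1) S(1)] by (blast intro: bij_betw_trans)
  moreover have "adj' (\<phi> (f u)) (\<phi> (f v)) \<longleftrightarrow> cube_adj u v" if "u \<in> cube_verts d" "v \<in> cube_verts d" for u v
  proof -
    have "f u \<in> V" "f v \<in> V" using that S by (auto dest: bij_betwE)
    then show ?thesis using that f assms(2) by simp
  qed
  ultimately show ?thesis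
    using S(1) bij_betw_imp_surj_on[OF assms(1)] unfolding induced_cubes_def by auto
qed

lemma cube_count_iso:
  assumes "bij_betw \<phi> V W" "\<And>u v. u \<in> V \<Longrightarrow> v \<in> V \<Longrightarrow> adj' (\<phi> u) (\<phi> v) \<longleftrightarrow> adj u v"
  shows "cube_count W adj' d = cube_count V adj d"
proof -
  define \<psi> where "\<psi> = the_inv_into V \<phi>"
  have \<psi>: "bij_betw \<psi> W V" "\<And>x. x \<in> W \<Longrightarrow> \<phi> (\<psi> x) = x"
    using assms(1) by (auto simp: \<psi>_def bij_betw_the_inv_into f_the_inv_into_f_bij_betw)
  have "adj (\<psi> x) (\<psi> y) \<longleftrightarrow> adj' x y" if "x \<in> W" "y \<in> W" for x y
    using assms(2)[of "\<psi> x" "\<psi> y"] \<psi> that by (auto dest: bij_betwE)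
  then have "\<psi> ` S' \<in> induced_cubes V adj d" if "S' \<in> induced_cubes W adj' d" for S'
    using image_mem_induced_cubes[OF \<psi>(1)] that by blast
  moreover have "\<phi> ` \<psi> ` S' = S'" if "S' \<in> induced_cubes W adj' d" for S'
    using that \<psi>(2) by (force simp: induced_cubes_def image_image)
  ultimately have "induced_cubes W adj' d \<subseteq> (image \<phi>) ` induced_cubes V adj d"
    by (metis image_eqI subsetI)
  then have "induced_cubes W adj' d = (image \<phi>) ` induced_cubes V adj d"
    using image_mem_induced_cubes[of \<phi> V W adj' adj, OF assms] by blast
  moreover have "inj_on (image \<phi>) (induced_cubes V adj d)"
    using inj_on_image_Pow[OF bij_betw_imp_inj_on[OF assms(1)]]
    by (rule inj_on_subset) (auto simp: induced_cubes_def)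
  ultimately show ?thesis
    by (simp add: cube_count_eq_card_induced_cubes card_image)
qed

lemma card_cube_verts: "card (cube_verts d) = 2 ^ d"
  using card_lists_length_eq[of "UNIV :: bool set" d] by (simp add: cube_verts_def)

lemma coeff_cube_poly:
  assumes "finite V"
  shows "coeff (cube_poly V adj) d = int (cube_count V adj d)"
proof (cases "d \<le> card V")
  case True
  then show ?thesis by (simp add: cube_poly_def coeff_sum)
next
  case False
  have "card V < 2 ^ d" using False less_exp[of d] by linarith
  have "S \<notin> induced_cubes V adj d" for S
  proof
    assume "S \<in> induced_cubes V adj d"
    then obtain f where "S \<subseteq> V" "bij_betw f (cube_verts d) S"
      by (auto simp: induced_cubes_def)
    then have "2 ^ d \<le> card V"
      using card_mono[OF assms] bij_betw_same_card card_cube_verts by metis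
    with \<open>card V < 2 ^ d\<close> show False by simp
  qed
  then have "induced_cubes V adj d = {}" by blast
  then show ?thesis using False by (simp add: cube_poly_def coeff_sum cube_count_eq_card_induced_cubes)
qed

definition cube_vertex :: "nat \<Rightarrow> nat set \<Rightarrow> bool list" where
  "cube_vertex d J = map (\<lambda>j. j \<in> J) [0..<d]"

lemma cube_verts_eq_image_cube_vertex: "cube_verts d = cube_vertex d ` Pow {..<d}"
proof (intro equalityI subsetI)
  fix u assume "u \<in> cube_verts d"
  then have "u = cube_vertex d {j. j < d \<and> u ! j}"
    by (intro nth_equalityI) (auto simp: cube_verts_def cube_vertex_def)
  then show "u \<in> cube_vertex d ` Pow {..<d}" by blast
qed (auto simp: cube_verts_def cube_vertex_def)

lemma inj_on_cube_vertex: "inj_on (cube_vertex d) (Pow {..<d})"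
proof (rule inj_onI)
  fix J J' assume "J \<in> Pow {..<d}" "J' \<in> Pow {..<d}" "cube_vertex d J = cube_vertex d J'"
  then show "J = J'"
    by (auto simp: cube_vertex_def list_eq_iff_nth_eq subset_iff)
qed

lemma cube_adj_cube_vertex_insert:
  assumes "j < d" "j \<notin> J"
  shows "cube_adj (cube_vertex d J) (cube_vertex d (insert j J))"
proof -
  have "{i. i < length (cube_vertex d J) \<and> cube_vertex d J ! i \<noteq> cube_vertex d (insert j J) ! i} = {j}"
    using assms by (auto simp: cube_vertex_def)
  then show ?thesis by (simp add: cube_adj_def cube_vertex_def)
qed

lemma diff_positions_Cons:
  "{j. j < length (a # u) \<and> (a # u) ! j \<noteq> (b # v) ! j} =
     (if a = b then {} else {0}) \<union> Suc ` {j. j < length u \<and> u ! j \<noteq> v ! j}"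
proof (rule set_eqI)
  fix j
  show "j \<in> {j. j < length (a # u) \<and> (a # u) ! j \<noteq> (b # v) ! j} \<longleftrightarrow>
      j \<in> (if a = b then {} else {0}) \<union> Suc ` {j. j < length u \<and> u ! j \<noteq> v ! j}"
    by (cases j) auto
qed

lemma cube_adj_Cons:
  assumes "length u = length v"
  shows "cube_adj (a # u) (b # v) \<longleftrightarrow> a = b \<and> cube_adj u v \<or> a \<noteq> b \<and> u = v"
proof -
  define D where "D = {j. j < length u \<and> u ! j \<noteq> v ! j}"
  have "card (Suc ` D) = card D" by (simp add: card_image)
  moreover have "finite D" by (simp add: D_def)
  moreover have "D = {} \<longleftrightarrow> u = v" using assms by (auto simp: D_def list_eq_iff_nth_eq)
  ultimately show ?thesis
    using assms unfolding cube_adj_def diff_positions_Cons D_def[symmetric] by auto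
qed

lemma cube_verts_Suc: "cube_verts (Suc d) = Cons False ` cube_verts d \<union> Cons True ` cube_verts d"
  by (auto simp: cube_verts_def length_Suc_conv)

section \<open>Hypercubes embedded in a power set\<close>

lemma sym_diff_insert: "x \<notin> A \<Longrightarrow> sym_diff B (insert x A) = sym_diff (sym_diff B A) {x}"
  by blast

lemma sym_diff_singleton_twice [simp]: "sym_diff (sym_diff B {x}) {x} = B"
  by blast

lemma sym_diff_square:
  assumes "\<alpha> \<noteq> \<beta>" "a \<noteq> \<alpha>" "sym_diff (sym_diff H {\<alpha>}) {a} = sym_diff (sym_diff H {\<beta>}) {b}"
  shows "sym_diff (sym_diff H {\<alpha>}) {a} = sym_diff (sym_diff H {\<alpha>}) {\<beta>}"
proof -
  have "b = \<alpha>" using eqset_imp_iff[OF assms(3), of \<alpha>] assms(1,2) by auto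
  then have "a = \<beta>" using eqset_imp_iff[OF assms(3), of a] assms(1,2) by auto
  then show ?thesis by simp
qed

lemma hypercube_map_eq_sym_diff_image:
  fixes F :: "nat set \<Rightarrow> 'a set"
  assumes inj: "inj_on F (Pow {..<d})"
    and step: "\<And>J j. J \<subseteq> {..<d} \<Longrightarrow> j < d \<Longrightarrow> j \<notin> J \<Longrightarrow> \<exists>a. F (insert j J) = sym_diff (F J) {a}"
    and c_inj: "inj_on c {..<d}" and c: "\<And>j. j < d \<Longrightarrow> F {j} = sym_diff (F {}) {c j}"
    and "J \<subseteq> {..<d}"
  shows "F J = sym_diff (F {}) (c ` J)"
  using \<open>J \<subseteq> {..<d}\<close>
proof (induction "card J" arbitrary: J rule: less_induct)
  case less
  have fin: "finite J" using less.prems finite_subset by blast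
  consider "J = {}" | j where "J = {j}" | j l where "j \<in> J" "l \<in> J" "j \<noteq> l"
    by (metis is_singletonI' is_singleton_the_elem)
  then show ?case
  proof cases
    case 1
    then show ?thesis by simp
  next
    case (2 j)
    then show ?thesis using c less.prems by simp
  next
    case (3 j l)
    txt \<open>Going around the square with corners J0, J0 + l, J0 + j and J: the last step from
      J0 + l cannot undo c l, because F is injective, so it adds c j.\<close>
    define J0 where "J0 = J - {j, l}"
    have J: "J = insert j (insert l J0)" "j \<notin> J0" "l \<notin> J0" "j \<notin> insert l J0" "l \<notin> insert j J0"
      using 3 by (auto simp: J0_def)
    have sub: "J0 \<subseteq> {..<d}" "insert l J0 \<subseteq> {..<d}" "insert j J0 \<subseteq> {..<d}" "j < d" "l < d"
      using less.prems 3 by (auto simp: J0_def)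
    have "J0 \<subset> J" "insert l J0 \<subset> J" "insert j J0 \<subset> J"
      using J by auto
    then have card_less: "card J0 < card J" "card (insert l J0) < card J" "card (insert j J0) < card J"
      using fin by (meson psubset_card_mono)+
    have cJ0: "c j \<notin> c ` J0" "c l \<notin> c ` J0" "c j \<noteq> c l"
      using sub J(2,3) 3(3) inj_on_image_mem_iff[OF c_inj _ sub(1)] inj_on_contraD[OF c_inj] by auto
    define H where "H = F J0"
    have H: "H = sym_diff (F {}) (c ` J0)"
      using less.hyps[OF card_less(1) sub(1)] by (simp add: H_def)
    have Fl: "F (insert l J0) = sym_diff H {c l}"
      using less.hyps[OF card_less(2) sub(2)] H by (simp only: image_insert sym_diff_insert[OF cJ0(2)])
    have Fj: "F (insert j J0) = sym_diff H {c j}"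
      using less.hyps[OF card_less(3) sub(3)] H by (simp only: image_insert sym_diff_insert[OF cJ0(1)])
    obtain a where a: "F J = sym_diff (F (insert l J0)) {a}"
      using step[OF sub(2,4) J(4)] J(1) by auto
    obtain b where b: "F J = sym_diff (F (insert j J0)) {b}"
      using step[OF sub(3,5) J(5)] J(1) by (auto simp: insert_commute)
    have "a \<noteq> c l"
    proof
      assume "a = c l"
      then have "F J = F J0" using a Fl by (simp add: H_def)
      moreover have "J \<noteq> J0" using J by blast
      ultimately show False using inj_onD[OF inj] less.prems sub(1) by blast
    qed
    then have "F J = sym_diff (sym_diff H {c l}) {c j}"
      using sym_diff_square[of "c l" "c j" a H b] a b Fl Fj cJ0(3) by simp
    moreover have cj: "c j \<notin> insert (c l) (c ` J0)" using cJ0 by blast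
    ultimately show ?thesis
      using H J(1) by (simp only: image_insert sym_diff_insert[OF cJ0(2)] sym_diff_insert[OF cj])
  qed
qed

lemma hypercube_face:
  fixes F :: "nat set \<Rightarrow> 'a set"
  assumes inj: "inj_on F (Pow {..<d})"
    and step: "\<And>J j. J \<subseteq> {..<d} \<Longrightarrow> j < d \<Longrightarrow> j \<notin> J \<Longrightarrow> \<exists>a. F (insert j J) = sym_diff (F J) {a}"
  obtains c where "inj_on c {..<d}" "\<And>J. J \<subseteq> {..<d} \<Longrightarrow> F J = sym_diff (F {}) (c ` J)"
proof -
  define c where "c j = (SOME a. F {j} = sym_diff (F {}) {a})" for j
  have c: "F {j} = sym_diff (F {}) {c j}" if "j < d" for j
    unfolding c_def by (rule someI_ex) (use step[of "{}" j] that in simp)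
  have c_inj: "inj_on c {..<d}"
  proof (rule inj_onI)
    fix j l assume "j \<in> {..<d}" "l \<in> {..<d}" "c j = c l"
    then have "F {j} = F {l}" using c by simp
    with \<open>j \<in> {..<d}\<close> \<open>l \<in> {..<d}\<close> show "j = l" using inj_onD[OF inj] by blast
  qed
  show ?thesis
    using that[OF c_inj] hypercube_map_eq_sym_diff_image[OF inj step c_inj c] by blast
qed

section \<open>Induced hypercubes of the integer grid are boxes\<close>

definition grid_step :: "nat list \<Rightarrow> nat list \<Rightarrow> bool" where
  "grid_step h h' \<longleftrightarrow> (\<exists>p < length h. h' = h[p := Suc (h ! p)])"

lemma grid_step_Nil [simp]: "\<not> grid_step [] h" "\<not> grid_step h []"
  by (auto simp: grid_step_def dest: arg_cong[of _ _ length])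

lemma grid_step_Cons:
  "grid_step (x # h) (y # h') \<longleftrightarrow> x = y \<and> grid_step h h' \<or> y = Suc x \<and> h' = h"
  by (auto simp: grid_step_def less_Suc_eq_0_disj)

definition grid_adj :: "nat list \<Rightarrow> nat list \<Rightarrow> bool" where
  "grid_adj h h' \<longleftrightarrow> grid_step h h' \<or> grid_step h' h"

lemma grid_adj_Cons:
  "grid_adj (x # h) (y # h') \<longleftrightarrow> x = y \<and> grid_adj h h' \<or> (y = Suc x \<or> x = Suc y) \<and> h = h'"
  by (auto simp: grid_adj_def grid_step_Cons)

definition cells :: "nat list \<Rightarrow> (nat \<times> nat) set" where
  "cells h = {(p, j). p < length h \<and> j < h ! p}"

lemma mem_cells [simp]: "(p, j) \<in> cells h \<longleftrightarrow> p < length h \<and> j < h ! p"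
  by (simp add: cells_def)

lemma cells_inj:
  assumes "length h = length h'" "cells h = cells h'"
  shows "h = h'"
proof (rule nth_equalityI)
  fix p assume p: "p < length h"
  have "j < h ! p \<longleftrightarrow> j < h' ! p" for j
    using eqset_imp_iff[OF assms(2), of "(p, j)"] p assms(1) by simp
  then show "h ! p = h' ! p" by (metis less_irrefl nat_neq_iff)
qed (fact assms(1))

lemma cells_list_update_Suc:
  "p < length h \<Longrightarrow> cells (h[p := Suc (h ! p)]) = insert (p, h ! p) (cells h)"
  by (auto simp: cells_def nth_list_update less_Suc_eq split: if_splits)

lemma cells_grid_adj:
  assumes "grid_adj h h'"
  shows "\<exists>c. cells h' = sym_diff (cells h) {c}"
proof -
  have "cells h' = sym_diff (cells h) {(p, h ! p)}" if "p < length h" "h' = h[p := Suc (h ! p)]" for p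
    using that by (auto simp: cells_list_update_Suc)
  moreover have "cells h' = sym_diff (cells h) {(p, h' ! p)}"
    if "p < length h'" "h = h'[p := Suc (h' ! p)]" for p
    using that by (auto simp: cells_list_update_Suc)
  ultimately show ?thesis
    using assms unfolding grid_adj_def grid_step_def by blast
qed

definition box :: "(nat \<times> bool) list \<Rightarrow> nat list set" where
  "box bs = {h. length h = length bs \<and>
     (\<forall>p < length bs. h ! p = fst (bs ! p) \<or> snd (bs ! p) \<and> h ! p = Suc (fst (bs ! p)))}"

definition box_dim :: "(nat \<times> bool) list \<Rightarrow> nat" where
  "box_dim bs = length (filter snd bs)"

lemma box_nth:
  "h \<in> box bs \<Longrightarrow> p < length bs \<Longrightarrow> h ! p = fst (bs ! p) \<or> snd (bs ! p) \<and> h ! p = Suc (fst (bs ! p))"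
  by (simp add: box_def)

lemma box_nonempty: "map fst bs \<in> box bs"
  by (simp add: box_def)

lemma box_Nil [simp]: "box [] = {[]}"
  by (simp add: box_def)

lemma box_Cons:
  "box ((b, free) # bs) = Cons b ` box bs \<union> (if free then Cons (Suc b) ` box bs else {})"
proof -
  have "h \<in> box ((b, free) # bs) \<longleftrightarrow>
      (\<exists>x h'. h = x # h' \<and> (x = b \<or> free \<and> x = Suc b) \<and> h' \<in> box bs)" for h
    by (cases h) (auto simp: box_def nth_Cons less_Suc_eq_0_disj split: nat.splits)
  then show ?thesis by auto
qed

lemma box_dim_Cons [simp]:
  "box_dim ((b, free) # bs) = (if free then Suc (box_dim bs) else box_dim bs)"
  by (simp add: box_dim_def)

lemma box_inj:
  assumes "box bs = box bs'"
  shows "bs = bs'"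
proof -
  have up: "(map fst bs)[p := Suc (fst (bs ! p))] \<in> box bs" if "p < length bs" "snd (bs ! p)" for bs p
    using that by (auto simp: box_def nth_list_update)
  have len: "length bs = length bs'"
    using box_nonempty[of bs] unfolding assms by (simp add: box_def)
  have fst: "fst (bs ! p) = fst (bs' ! p)" if "p < length bs" for p
    using box_nth[OF box_nonempty[of bs, unfolded assms], of p]
      box_nth[OF box_nonempty[of bs', folded assms], of p]
      that len by auto
  have snd: "snd (bs ! p) \<longleftrightarrow> snd (bs' ! p)" if "p < length bs" for p
    using box_nth[OF up[of p bs, unfolded assms], of p] box_nth[OF up[of p bs', folded assms], of p]
      that len fst[OF that] by auto
  show ?thesis using len fst snd by (simp add: list_eq_iff_nth_eq prod_eq_iff)
qed

lemma cells_diff_eq_cells_iff: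
  assumes "length h = length b" "C \<subseteq> {(p, b ! p) |p. p < length b}"
  shows "cells h - C = cells b \<longleftrightarrow>
    (\<forall>p < length b. h ! p = b ! p \<or> (p, b ! p) \<in> C \<and> h ! p = Suc (b ! p))"
proof
  assume eq: "cells h - C = cells b"
  show "\<forall>p < length b. h ! p = b ! p \<or> (p, b ! p) \<in> C \<and> h ! p = Suc (b ! p)"
  proof (intro allI impI)
    fix p assume p: "p < length b"
    have mem: "(p, j) \<in> cells h \<and> (p, j) \<notin> C \<longleftrightarrow> j < b ! p" for j
      using eqset_imp_iff[OF eq, of "(p, j)"] p by simp
    have "(p, j) \<notin> C" if "j \<noteq> b ! p" for j
      using assms(2) that by auto
    then show "h ! p = b ! p \<or> (p, b ! p) \<in> C \<and> h ! p = Suc (b ! p)"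
      using mem[of "h ! p"] mem[of "b ! p"] mem[of "Suc (b ! p)"] p assms(1)
      by (metis Suc_lessI lessI mem_cells not_less_iff_gr_or_eq)
  qed
next
  assume "\<forall>p < length b. h ! p = b ! p \<or> (p, b ! p) \<in> C \<and> h ! p = Suc (b ! p)"
  then show "cells h - C = cells b"
    using assms by (fastforce simp: less_Suc_eq)
qed

lemma interval_eq_box:
  assumes disj: "B \<inter> C = {}"
    and interval: "\<And>X. X - C = B \<Longrightarrow> \<exists>h. length h = n \<and> X = cells h"
  obtains bs where "length bs = n" "box_dim bs = card C"
    "box bs = {h. length h = n \<and> cells h - C = B}"
proof -
  obtain b where b: "length b = n" "B = cells b"
    using interval[of B] disj by blast
  txt \<open>A cell that can be added to B within the interval is the next cell of its column.\<close>
  have C: "C \<subseteq> {(p, b ! p) |p. p < n}"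
  proof
    fix c assume "c \<in> C"
    then obtain p j where c: "c = (p, j)" "(p, j) \<in> C" by (cases c) auto
    then have "insert (p, j) B - C = B" using disj by blast
    then obtain h where h: "length h = n" "insert (p, j) (cells b) = cells h"
      using interval b(2) by metis
    have "(p, j) \<in> cells h" "(p, j) \<notin> cells b"
      using h(2) c(2) disj b(2) by blast+
    moreover have "(p, b ! p) \<in> cells b" if "(p, b ! p) \<in> cells h" "b ! p \<noteq> j"
      using h(2) that by blast
    ultimately have "j = b ! p" "p < n" using h(1) b(1) by fastforce+
    then show "c \<in> {(p, b ! p) |p. p < n}" using c by blast
  qed
  define bs where "bs = map (\<lambda>p. (b ! p, (p, b ! p) \<in> C)) [0..<n]"
  have "C = (\<lambda>p. (p, b ! p)) ` {p. p < n \<and> (p, b ! p) \<in> C}"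
    using C by auto
  then have "card C = card {p. p < n \<and> (p, b ! p) \<in> C}"
    by (metis (no_types, lifting) card_image inj_onI prod.inject)
  then have "box_dim bs = card C"
    by (simp add: box_dim_def bs_def length_filter_conv_card cong: conj_cong)
  moreover have "box bs = {h. length h = n \<and> cells h - C = B}"
    using cells_diff_eq_cells_iff[of _ b C] C b by (auto simp: box_def bs_def)
  moreover have "length bs = n" by (simp add: bs_def)
  ultimately show ?thesis using that by blast
qed

lemma induced_grid_cube_cells:
  assumes V: "\<forall>h\<in>V. length h = n" and S: "S \<in> induced_cubes V grid_adj d"
  obtains B C where "B \<inter> C = {}" "card C = d" "cells ` S = {X. X - C = B}"
proof -
  obtain f where S_sub: "S \<subseteq> V" and f: "bij_betw f (cube_verts d) S"
    and f_adj: "\<forall>u\<in>cube_verts d. \<forall>v\<in>cube_verts d. grid_adj (f u) (f v) \<longleftrightarrow> cube_adj u v"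
    using S by (auto simp: induced_cubes_def)
  have len: "length h = n" if "h \<in> S" for h using that S_sub V by blast
  define F where "F J = cells (f (cube_vertex d J))" for J
  have vert: "cube_vertex d J \<in> cube_verts d" if "J \<subseteq> {..<d}" for J
    using that cube_verts_eq_image_cube_vertex by blast
  have F_inj: "inj_on F (Pow {..<d})"
  proof (rule inj_onI)
    fix J J' assume J: "J \<in> Pow {..<d}" "J' \<in> Pow {..<d}" "F J = F J'"
    then have "f (cube_vertex d J) = f (cube_vertex d J')"
      using cells_inj len vert bij_betwE[OF f] by (metis F_def PowD)
    then show "J = J'"
      using J vert bij_betw_imp_inj_on[OF f] inj_on_cube_vertex by (metis PowD inj_onD)
  qed
  have F_step: "\<exists>a. F (insert j J) = sym_diff (F J) {a}" if "J \<subseteq> {..<d}" "j < d" "j \<notin> J" for J j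
  proof -
    have "insert j J \<subseteq> {..<d}" using that by simp
    then have "grid_adj (f (cube_vertex d J)) (f (cube_vertex d (insert j J)))"
      using f_adj vert that(1) cube_adj_cube_vertex_insert[OF that(2,3)] by blast
    then show ?thesis unfolding F_def by (rule cells_grid_adj)
  qed
  obtain c where c_inj: "inj_on c {..<d}"
    and F: "\<And>J. J \<subseteq> {..<d} \<Longrightarrow> F J = sym_diff (F {}) (c ` J)"
    using hypercube_face[where F = F, OF F_inj F_step] by blast
  define C where "C = c ` {..<d}"
  define B where "B = F {} - C"
  have S_eq: "S = (f \<circ> cube_vertex d) ` Pow {..<d}"
    using bij_betw_imp_surj_on[OF f] by (simp add: cube_verts_eq_image_cube_vertex image_comp)
  have "cells ` S = {X. X - C = B}"
  proof (intro equalityI subsetI)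
    fix X assume "X \<in> cells ` S"
    then obtain J where J: "J \<subseteq> {..<d}" "X = F J" using S_eq by (auto simp: F_def)
    then have "c ` J \<subseteq> C" by (auto simp: C_def)
    then show "X \<in> {X. X - C = B}" using F[OF J(1)] J(2) unfolding B_def by blast
  next
    fix X assume "X \<in> {X. X - C = B}"
    then have "sym_diff (F {}) X \<subseteq> C" by (auto simp: B_def)
    define J where "J = {j. j < d \<and> c j \<in> sym_diff (F {}) X}"
    have "J \<subseteq> {..<d}" by (auto simp: J_def)
    moreover have "c ` J = sym_diff (F {}) X"
      using \<open>sym_diff (F {}) X \<subseteq> C\<close> unfolding J_def C_def by blast
    ultimately have "F J = sym_diff (F {}) (sym_diff (F {}) X)" using F by metis
    then have "X = cells (f (cube_vertex d J))" unfolding F_def by blast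
    moreover have "f (cube_vertex d J) \<in> S" using S_eq \<open>J \<subseteq> {..<d}\<close> by auto
    ultimately show "X \<in> cells ` S" by blast
  qed
  moreover have "B \<inter> C = {}" "card C = d"
    using c_inj by (auto simp: B_def C_def card_image)
  ultimately show ?thesis using that by blast
qed

lemma induced_grid_cube_is_box:
  assumes V: "\<forall>h\<in>V. length h = n" and S: "S \<in> induced_cubes V grid_adj d"
  obtains bs where "box_dim bs = d" "S = box bs"
proof -
  have len: "length h = n" if "h \<in> S" for h
    using that S V by (auto simp: induced_cubes_def)
  obtain B C where disj: "B \<inter> C = {}" and "card C = d" and cells_S: "cells ` S = {X. X - C = B}"
    using induced_grid_cube_cells[OF assms] by blast
  obtain bs where bs: "box_dim bs = card C" "box bs = {h. length h = n \<and> cells h - C = B}"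
  proof (rule interval_eq_box[OF disj])
    show "\<exists>h. length h = n \<and> X = cells h" if "X - C = B" for X
      using that cells_S len by (metis (mono_tags) imageE mem_Collect_eq)
  qed
  have "S = box bs"
  proof (intro equalityI subsetI)
    fix h assume h: "h \<in> S"
    then have "cells h - C = B" using cells_S by blast
    then show "h \<in> box bs" using bs(2) len[OF h] by simp
  next
    fix h assume "h \<in> box bs"
    then have h: "length h = n" "cells h - C = B" using bs(2) by simp_all
    then obtain h' where "h' \<in> S" "cells h = cells h'"
      using cells_S by (metis (mono_tags) imageE mem_Collect_eq)
    then show "h \<in> S" using cells_inj len h(1) by metis
  qed
  with bs(1) \<open>card C = d\<close> show ?thesis using that by blast
qed

fun corner :: "(nat \<times> bool) list \<Rightarrow> bool list \<Rightarrow> nat list" where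
  "corner [] u = []"
| "corner ((b, free) # bs) u =
     (if free then (if hd u then Suc b else b) # corner bs (tl u) else b # corner bs u)"

lemma corner_image: "corner bs ` cube_verts (box_dim bs) = box bs"
proof (induction bs)
  case Nil
  then show ?case by (auto simp: cube_verts_def box_dim_def)
next
  case (Cons c bs)
  obtain b free where c: "c = (b, free)" by fastforce
  show ?case
    using Cons.IH[symmetric]
    by (simp add: c box_Cons cube_verts_Suc image_Un image_image)
qed

lemma corner_embedding:
  assumes "u \<in> cube_verts (box_dim bs)" "v \<in> cube_verts (box_dim bs)"
  shows "(corner bs u = corner bs v \<longleftrightarrow> u = v) \<and>
    (grid_adj (corner bs u) (corner bs v) \<longleftrightarrow> cube_adj u v)"
  using assms
proof (induction bs arbitrary: u v)
  case Nil
  then show ?case by (simp add: cube_verts_def cube_adj_def grid_adj_def box_dim_def)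
next
  case (Cons c bs)
  obtain b free where c: "c = (b, free)" by fastforce
  show ?case
  proof (cases free)
    case True
    then obtain p u' q v' where "u = p # u'" "v = q # v'"
      "u' \<in> cube_verts (box_dim bs)" "v' \<in> cube_verts (box_dim bs)"
      using Cons.prems by (auto simp: c cube_verts_Suc)
    moreover from this have "length u' = length v'" by (simp add: cube_verts_def)
    ultimately show ?thesis
      using Cons.IH True by (auto simp: c grid_adj_Cons cube_adj_Cons)
  next
    case False
    then show ?thesis
      using Cons by (simp add: c grid_adj_Cons)
  qed
qed

lemma box_mem_induced_cubes:
  assumes "box bs \<subseteq> V"
  shows "box bs \<in> induced_cubes V grid_adj (box_dim bs)"
proof -
  have "bij_betw (corner bs) (cube_verts (box_dim bs)) (box bs)"
    using corner_embedding corner_image by (auto simp: bij_betw_def inj_on_def)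
  then show ?thesis
    using assms corner_embedding unfolding induced_cubes_def by blast
qed

lemma cube_count_grid:
  assumes "\<forall>h\<in>V. length h = n"
  shows "cube_count V grid_adj d = card {bs. box_dim bs = d \<and> box bs \<subseteq> V}"
proof -
  have "induced_cubes V grid_adj d = box ` {bs. box_dim bs = d \<and> box bs \<subseteq> V}"
  proof (intro equalityI subsetI)
    fix S assume S: "S \<in> induced_cubes V grid_adj d"
    then obtain bs where "box_dim bs = d" "S = box bs"
      using induced_grid_cube_is_box[OF assms] by blast
    moreover have "S \<subseteq> V" using S by (simp add: induced_cubes_def)
    ultimately show "S \<in> box ` {bs. box_dim bs = d \<and> box bs \<subseteq> V}" by blast
  qed (auto intro: box_mem_induced_cubes)
  moreover have "inj_on box {bs. box_dim bs = d \<and> box bs \<subseteq> V}"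
    by (auto intro: inj_onI box_inj)
  ultimately show ?thesis
    by (simp add: cube_count_eq_card_induced_cubes card_image)
qed

section \<open>Pell strings as grid points\<close>

fun pell_word :: "nat \<Rightarrow> nat list \<Rightarrow> bool" where
  "pell_word k [] = True"
| "pell_word k [x] = (x < k)"
| "pell_word k (x # y # w) = (if x < k then pell_word k (y # w) else x = k \<and> y = k \<and> pell_word k w)"

lemma pell_word_Cons:
  "pell_word k (x # w) \<longleftrightarrow> x < k \<and> pell_word k w \<or> x = k \<and> (\<exists>w'. w = k # w' \<and> pell_word k w')"
  by (cases w) auto

lemma pell_word_append_block: "pell_block k b \<Longrightarrow> pell_word k (b @ w) \<longleftrightarrow> pell_word k w"
  unfolding pell_block_def by (auto simp: pell_word_Cons)

lemma pell_word_iff_concat_blocks: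
  "pell_word k w \<longleftrightarrow> (\<exists>bs. w = concat bs \<and> (\<forall>b\<in>set bs. pell_block k b))"
proof
  show "pell_word k w \<Longrightarrow> \<exists>bs. w = concat bs \<and> (\<forall>b\<in>set bs. pell_block k b)"
  proof (induction k w rule: pell_word.induct)
    case (2 k x)
    then show ?case by (intro exI[of _ "[[x]]"]) (simp add: pell_block_def)
  next
    case (3 k x y w)
    show ?case
    proof (cases "x < k")
      case True
      with 3 obtain bs where "y # w = concat bs" "\<forall>b\<in>set bs. pell_block k b" by auto
      with True show ?thesis by (intro exI[of _ "[x] # bs"]) (simp add: pell_block_def)
    next
      case False
      with 3 obtain bs where "w = concat bs" "\<forall>b\<in>set bs. pell_block k b" "x = k" "y = k" by auto
      then show ?thesis by (intro exI[of _ "[k, k] # bs"]) (simp add: pell_block_def)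
    qed
  qed (rule exI[of _ "[]"], simp)
  have "\<forall>b\<in>set bs. pell_block k b \<Longrightarrow> pell_word k (concat bs)" for bs
    by (induction bs) (auto simp: pell_word_append_block)
  then show "\<exists>bs. w = concat bs \<and> (\<forall>b\<in>set bs. pell_block k b) \<Longrightarrow> pell_word k w"
    by blast
qed

lemma pell_strings_eq: "pell_strings n k = {w. length w = n \<and> pell_word k w}"
  by (auto simp: pell_strings_def pell_word_iff_concat_blocks)

lemma pell_word_cases [consumes 1, case_names Nil letter block]:
  assumes "pell_word k w"
  obtains "w = []"
  | x w' where "w = x # w'" "x < k" "pell_word k w'"
  | w' where "w = k # k # w'" "pell_word k w'"
  using assms by (cases w) (auto simp: pell_word_Cons)

lemma pell_word_set: "pell_word k w \<Longrightarrow> set w \<subseteq> {0..k}"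
  by (induction k w rule: pell_word.induct) (auto split: if_splits)

lemma finite_pell_strings: "finite (pell_strings n k)"
proof (rule finite_subset)
  show "pell_strings n k \<subseteq> {w. set w \<subseteq> {0..k} \<and> length w = n}"
    by (auto simp: pell_strings_eq dest: pell_word_set)
qed (rule finite_lists_length_eq, simp)

fun heights :: "nat \<Rightarrow> nat list \<Rightarrow> nat list" where
  "heights k [] = []"
| "heights k [x] = [x]"
| "heights k (x # y # w) = (if x < k then x # heights k (y # w) else x # (k - 1) # heights k w)"

lemma heights_letter [simp]: "x < k \<Longrightarrow> heights k (x # w) = x # heights k w"
  by (cases w) auto

lemma length_heights [simp]: "length (heights k w) = length w"
  by (induction k w rule: heights.induct) auto

lemma heights_inj:
  assumes "pell_word k u" "pell_word k v" "heights k u = heights k v"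
  shows "u = v"
  using assms
proof (induction "length u" arbitrary: u v rule: less_induct)
  case less
  from less.prems(1) show ?case
  proof (cases rule: pell_word_cases)
    case Nil
    then show ?thesis using less.prems(3) by (metis heights.simps(1) length_0_conv length_heights)
  next
    case (letter x u')
    from less.prems(2) show ?thesis
      by (cases rule: pell_word_cases) (use letter less in auto)
  next
    case (block u')
    from less.prems(2) show ?thesis
      by (cases rule: pell_word_cases) (use block less in auto)
  qed
qed

lemma heights_eq_Cons_iff:
  assumes "pell_word k u" "pell_word k v" "x < k"
  shows "heights k u = x # heights k v \<longleftrightarrow> u = x # v"
proof
  assume "heights k u = x # heights k v"
  with assms show "u = x # v"
    by (cases rule: pell_word_cases) (auto dest: heights_inj)
qed (use assms in simp)

lemma pell_step_Nil [simp]: "\<not> pell_step k [] v" "\<not> pell_step k u []"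
  by (auto simp: pell_step_def)

lemma pell_step_Cons:
  "pell_step k (x # u) (y # v) \<longleftrightarrow>
     x = y \<and> pell_step k u v \<or> u = v \<and> x \<le> k - 2 \<and> y = Suc x \<or>
     x = k - 1 \<and> y = k \<and> (\<exists>r. u = (k - 1) # r \<and> v = k # r)"
  (is "?L \<longleftrightarrow> ?R")
proof
  assume ?L
  then consider (letter) a b i where "i \<le> k - 2" "x # u = a @ [i] @ b" "y # v = a @ [Suc i] @ b"
    | (block) a b where "x # u = a @ [k - 1, k - 1] @ b" "y # v = a @ [k, k] @ b"
    unfolding pell_step_def by blast
  then show ?R
  proof cases
    case (letter a b i)
    then show ?thesis by (cases a) (auto simp: pell_step_def)
  next
    case (block a b)
    then show ?thesis by (cases a) (auto simp: pell_step_def)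
  qed
next
  assume ?R
  then show ?L
    unfolding pell_step_def by (elim disjE exE conjE; metis append_Cons append_Nil)
qed

lemma pell_step_iff_grid_step:
  assumes "k \<ge> 2" "pell_word k u" "pell_word k v"
  shows "pell_step k u v \<longleftrightarrow> grid_step (heights k u) (heights k v)"
  using assms(2,3)
proof (induction "length u" arbitrary: u v rule: less_induct)
  case less
  from less.prems(1) show ?case
  proof (cases rule: pell_word_cases)
    case Nil
    then show ?thesis by simp
  next
    case (letter x u')
    note u = this
    from less.prems(2) show ?thesis
    proof (cases rule: pell_word_cases)
      case Nil
      then show ?thesis by simp
    next
      case (letter y v')
      then show ?thesis
        using u less heights_inj[of k u' v'] by (auto simp: pell_step_Cons grid_step_Cons)
    next
      case (block v')
      then show ?thesis
        using u assms(1) heights_eq_Cons_iff[of k u' v' "k - 1"]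
        by (auto simp: pell_step_Cons grid_step_Cons)
    qed
  next
    case (block u')
    note u = this
    from less.prems(2) show ?thesis
    proof (cases rule: pell_word_cases)
      case Nil
      then show ?thesis by simp
    next
      case (letter y v')
      then show ?thesis using u assms(1) by (auto simp: pell_step_Cons grid_step_Cons)
    next
      case (block v')
      then show ?thesis using u less assms(1) by (auto simp: pell_step_Cons grid_step_Cons)
    qed
  qed
qed

lemma pell_adj_iff_grid_adj:
  assumes "k \<ge> 2" "pell_word k u" "pell_word k v"
  shows "pell_adj k u v \<longleftrightarrow> grid_adj (heights k u) (heights k v)"
  using assms by (simp add: pell_adj_def grid_adj_def pell_step_iff_grid_step)

definition pell_heights :: "nat \<Rightarrow> nat \<Rightarrow> nat list set" where
  "pell_heights k n = heights k ` pell_strings n k"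

lemma length_pell_heights: "h \<in> pell_heights k n \<Longrightarrow> length h = n"
  by (auto simp: pell_heights_def pell_strings_eq)

lemma Cons_mem_pell_heights:
  "x # h \<in> pell_heights k (Suc n) \<longleftrightarrow>
     x < k \<and> h \<in> pell_heights k n \<or>
     x = k \<and> (\<exists>m h'. n = Suc m \<and> h = (k - 1) # h' \<and> h' \<in> pell_heights k m)"
proof
  assume "x # h \<in> pell_heights k (Suc n)"
  then obtain w where w: "pell_word k w" "length w = Suc n" "x # h = heights k w"
    by (auto simp: pell_heights_def pell_strings_eq)
  from w(1) show "x < k \<and> h \<in> pell_heights k n \<or>
      x = k \<and> (\<exists>m h'. n = Suc m \<and> h = (k - 1) # h' \<and> h' \<in> pell_heights k m)"
    by (cases rule: pell_word_cases) (use w in \<open>auto simp: pell_heights_def pell_strings_eq\<close>)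
next
  assume "x < k \<and> h \<in> pell_heights k n \<or>
      x = k \<and> (\<exists>m h'. n = Suc m \<and> h = (k - 1) # h' \<and> h' \<in> pell_heights k m)"
  then show "x # h \<in> pell_heights k (Suc n)"
  proof (elim disjE conjE exE)
    assume "x < k" "h \<in> pell_heights k n"
    then obtain w where "pell_word k w" "length w = n" "h = heights k w"
      by (auto simp: pell_heights_def pell_strings_eq)
    with \<open>x < k\<close> show ?thesis
      by (auto simp: pell_heights_def pell_strings_eq pell_word_Cons intro!: image_eqI[of _ _ "x # w"])
  next
    fix m h' assume "x = k" "n = Suc m" "h = (k - 1) # h'" "h' \<in> pell_heights k m"
    then obtain w where "pell_word k w" "length w = m" "h' = heights k w"
      by (auto simp: pell_heights_def pell_strings_eq)
    with \<open>x = k\<close> \<open>n = Suc m\<close> \<open>h = (k - 1) # h'\<close> show ?thesis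
      by (auto simp: pell_heights_def pell_strings_eq intro!: image_eqI[of _ _ "k # k # w"])
  qed
qed

section \<open>Counting boxes of Pell heights\<close>

definition pell_boxes :: "nat \<Rightarrow> nat \<Rightarrow> (nat \<times> bool) list set" where
  "pell_boxes k n = {bs. box bs \<subseteq> pell_heights k n}"

lemma box_subset_Cons_image:
  "box bs \<subseteq> Cons y ` X \<longleftrightarrow> (\<exists>bs'. bs = (y, False) # bs' \<and> box bs' \<subseteq> X)"
proof (cases bs)
  case Nil
  then show ?thesis by auto
next
  case (Cons c bs')
  obtain b free where c: "c = (b, free)" by fastforce
  have "Suc b # map fst bs' \<notin> Cons b ` X" by auto
  then show ?thesis
    using box_nonempty[of bs'] by (auto simp: Cons c box_Cons)
qed

lemma Cons_image_box_subset_pell_heights: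
  "Cons x ` box bs \<subseteq> pell_heights k (Suc n) \<longleftrightarrow>
     x < k \<and> bs \<in> pell_boxes k n \<or>
     x = k \<and> (\<exists>m bs'. n = Suc m \<and> bs = (k - 1, False) # bs' \<and> bs' \<in> pell_boxes k m)"
proof
  assume sub: "Cons x ` box bs \<subseteq> pell_heights k (Suc n)"
  have "x < k \<or> x = k \<and> (\<exists>m. n = Suc m)"
    using sub box_nonempty[of bs] Cons_mem_pell_heights by blast
  moreover have "bs \<in> pell_boxes k n" if "x < k"
    using sub that Cons_mem_pell_heights by (auto simp: pell_boxes_def)
  moreover have "\<exists>bs'. bs = (k - 1, False) # bs' \<and> bs' \<in> pell_boxes k m" if "x = k" "n = Suc m" for m
  proof -
    have "h \<in> Cons (k - 1) ` pell_heights k m" if "h \<in> box bs" for h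
    proof -
      have "k # h \<in> pell_heights k (Suc n)" using sub \<open>x = k\<close> that by blast
      then show ?thesis using \<open>n = Suc m\<close> by (auto simp: Cons_mem_pell_heights)
    qed
    then have "box bs \<subseteq> Cons (k - 1) ` pell_heights k m" by blast
    then show ?thesis by (simp add: box_subset_Cons_image pell_boxes_def)
  qed
  ultimately show "x < k \<and> bs \<in> pell_boxes k n \<or>
      x = k \<and> (\<exists>m bs'. n = Suc m \<and> bs = (k - 1, False) # bs' \<and> bs' \<in> pell_boxes k m)"
    by blast
next
  assume "x < k \<and> bs \<in> pell_boxes k n \<or>
      x = k \<and> (\<exists>m bs'. n = Suc m \<and> bs = (k - 1, False) # bs' \<and> bs' \<in> pell_boxes k m)"
  then show "Cons x ` box bs \<subseteq> pell_heights k (Suc n)"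
  proof (elim disjE conjE exE)
    assume "x < k" "bs \<in> pell_boxes k n"
    then show ?thesis by (auto simp: pell_boxes_def Cons_mem_pell_heights)
  next
    fix m bs' assume "x = k" "n = Suc m" "bs = (k - 1, False) # bs'" "bs' \<in> pell_boxes k m"
    then show ?thesis by (auto simp: pell_boxes_def Cons_mem_pell_heights box_Cons)
  qed
qed

lemma Cons_mem_pell_boxes:
  assumes "k \<ge> 1"
  shows "(b, free) # bs \<in> pell_boxes k (Suc n) \<longleftrightarrow>
    (if free then Suc b < k else b < k) \<and> bs \<in> pell_boxes k n \<or>
    b = (if free then k - 1 else k) \<and>
      (\<exists>m bs'. n = Suc m \<and> bs = (k - 1, False) # bs' \<and> bs' \<in> pell_boxes k m)"
proof (cases free)
  case False
  then show ?thesis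
    using Cons_image_box_subset_pell_heights[of b bs k n] by (simp add: pell_boxes_def box_Cons)
next
  case True
  define E where "E \<longleftrightarrow> (\<exists>m bs'. n = Suc m \<and> bs = (k - 1, False) # bs' \<and> bs' \<in> pell_boxes k m)"
  have "bs \<in> pell_boxes k n" if E
  proof -
    from \<open>E\<close> obtain m bs' where "n = Suc m" "bs = (k - 1, False) # bs'" "bs' \<in> pell_boxes k m"
      by (auto simp: E_def)
    then show ?thesis
      using assms Cons_image_box_subset_pell_heights[of "k - 1" bs' k m]
      by (simp add: pell_boxes_def box_Cons)
  qed
  moreover have "(b, free) # bs \<in> pell_boxes k (Suc n) \<longleftrightarrow>
      (b < k \<and> bs \<in> pell_boxes k n \<or> b = k \<and> E) \<and> (Suc b < k \<and> bs \<in> pell_boxes k n \<or> Suc b = k \<and> E)"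
    using Cons_image_box_subset_pell_heights[of b bs k n]
      Cons_image_box_subset_pell_heights[of "Suc b" bs k n] True
    by (simp add: pell_boxes_def box_Cons E_def)
  ultimately show ?thesis
    using True assms by (auto simp: E_def)
qed

lemma Nil_notin_pell_boxes_Suc: "[] \<notin> pell_boxes k (Suc n)"
  using length_pell_heights[of "[]" k "Suc n"] by (auto simp: pell_boxes_def)

lemma pell_boxes_0: "pell_boxes k 0 = {[]}"
proof -
  have "pell_heights k 0 = {[]}"
    by (auto simp: pell_heights_def pell_strings_eq)
  moreover have "box bs \<subseteq> {[]} \<longleftrightarrow> bs = []" for bs
    using box_nonempty[of bs] by auto
  ultimately show ?thesis by (auto simp: pell_boxes_def)
qed

lemma pell_boxes_Suc:
  assumes "k \<ge> 1"
  shows "pell_boxes k (Suc n) =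
    (\<lambda>(b, bs). (b, False) # bs) ` ({..<k} \<times> pell_boxes k n) \<union>
    (\<lambda>(b, bs). (b, True) # bs) ` ({..<k - 1} \<times> pell_boxes k n) \<union>
    (case n of 0 \<Rightarrow> {} | Suc m \<Rightarrow>
       Cons (k, False) ` Cons (k - 1, False) ` pell_boxes k m \<union>
       Cons (k - 1, True) ` Cons (k - 1, False) ` pell_boxes k m)" (is "_ = ?R")
proof (rule set_eqI)
  fix bs
  show "bs \<in> pell_boxes k (Suc n) \<longleftrightarrow> bs \<in> ?R"
  proof (cases bs)
    case Nil
    then show ?thesis using Nil_notin_pell_boxes_Suc by (auto split: nat.splits)
  next
    case (Cons c bs')
    obtain b free where "c = (b, free)" by fastforce
    then show ?thesis
      using Cons Cons_mem_pell_boxes[OF assms, of b free bs' n] assms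
      by (cases free) (auto split: nat.splits)
  qed
qed

lemma finite_pell_boxes: "finite (pell_boxes k n)"
proof (rule finite_imageD)
  have "finite (pell_heights k n)" by (simp add: pell_heights_def finite_pell_strings)
  then show "finite (box ` pell_boxes k n)"
    by (rule finite_subset[rotated, OF finite_Pow_iff[THEN iffD2]]) (auto simp: pell_boxes_def)
  show "inj_on box (pell_boxes k n)" by (auto intro: inj_onI box_inj)
qed

definition box_poly :: "(nat \<times> bool) list set \<Rightarrow> int poly" where
  "box_poly A = (\<Sum>bs\<in>A. monom 1 (box_dim bs))"

lemma box_poly_empty [simp]: "box_poly {} = 0"
  by (simp add: box_poly_def)

lemma coeff_box_poly: "finite A \<Longrightarrow> coeff (box_poly A) d = int (card {bs \<in> A. box_dim bs = d})"
  by (simp add: box_poly_def coeff_sum sum.If_cases Int_def)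

lemma box_poly_union:
  "finite A \<Longrightarrow> finite B \<Longrightarrow> A \<inter> B = {} \<Longrightarrow> box_poly (A \<union> B) = box_poly A + box_poly B"
  by (simp add: box_poly_def sum.union_disjoint)

lemma box_poly_Cons_image:
  "box_poly (Cons (b, free) ` A) = (if free then [:0, 1:] else 1) * box_poly A"
  unfolding box_poly_def by (simp add: sum.reindex sum_distrib_left monom_Suc)

lemma box_poly_prepend:
  "box_poly ((\<lambda>(b, bs). (b, free) # bs) ` (B \<times> A)) =
     of_nat (card B) * (if free then [:0, 1:] else 1) * box_poly A"
proof -
  have "inj_on (\<lambda>(b, bs). (b, free) # bs) (B \<times> A)" by (auto intro: inj_onI)
  then have "box_poly ((\<lambda>(b, bs). (b, free) # bs) ` (B \<times> A)) =
      (\<Sum>b\<in>B. \<Sum>bs\<in>A. monom 1 (box_dim ((b, free) # bs)))"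
    by (simp add: box_poly_def sum.reindex sum.cartesian_product' del: box_dim_Cons)
  also have "\<dots> = of_nat (card B) * (if free then [:0, 1:] else 1) * box_poly A"
    by (simp add: box_poly_def sum_distrib_left monom_Suc)
  finally show ?thesis .
qed

lemma box_poly_pell_boxes_Suc:
  assumes "k \<ge> 2"
  shows "box_poly (pell_boxes k (Suc n)) =
    [:int k, int k - 1:] * box_poly (pell_boxes k n) +
    (case n of 0 \<Rightarrow> 0 | Suc m \<Rightarrow> [:1, 1:] * box_poly (pell_boxes k m))"
proof -
  define P where "P n = box_poly (pell_boxes k n)" for n
  define letters where "letters = (\<lambda>(b, bs). (b, False) # bs) ` ({..<k} \<times> pell_boxes k n)"
  define edges where "edges = (\<lambda>(b, bs). (b, True) # bs) ` ({..<k - 1} \<times> pell_boxes k n)"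
  define blocks where "blocks m = Cons (k, False) ` Cons (k - 1, False) ` pell_boxes k m" for m
  define block_edges where
    "block_edges m = Cons (k - 1, True) ` Cons (k - 1, False) ` pell_boxes k m" for m
  have fin: "finite letters" "finite edges" "finite (blocks m)" "finite (block_edges m)" for m
    by (simp_all add: letters_def edges_def blocks_def block_edges_def finite_pell_boxes)
  have disj: "letters \<inter> edges = {}" "(letters \<union> edges) \<inter> (blocks m \<union> block_edges m) = {}"
    "blocks m \<inter> block_edges m = {}" for m
    using assms by (auto simp: letters_def edges_def blocks_def block_edges_def)
  have "P (Suc n) = box_poly (letters \<union> edges \<union>
      (case n of 0 \<Rightarrow> {} | Suc m \<Rightarrow> blocks m \<union> block_edges m))"
    unfolding P_def letters_def edges_def blocks_def block_edges_def
    using assms by (subst pell_boxes_Suc) simp_all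
  also have "\<dots> = box_poly letters + box_poly edges +
      (case n of 0 \<Rightarrow> 0 | Suc m \<Rightarrow> box_poly (blocks m) + box_poly (block_edges m))"
    using fin disj by (simp add: box_poly_union split: nat.split)
  also have "\<dots> = (of_nat k + of_nat (k - 1) * [:0, 1:]) * P n +
      (case n of 0 \<Rightarrow> 0 | Suc m \<Rightarrow> [:1, 1:] * P m)"
    by (simp add: P_def letters_def edges_def blocks_def block_edges_def box_poly_prepend
        box_poly_Cons_image algebra_simps split: nat.split)
  also have "of_nat k + of_nat (k - 1) * [:0, 1:] = [:int k, int k - 1:]"
    using assms by (simp add: of_nat_poly)
  finally show ?thesis by (simp add: P_def split: nat.split)
qed

lemma pell_cube_poly_eq_box_poly:
  assumes "k \<ge> 2"
  shows "pell_cube_poly n k = box_poly (pell_boxes k n)"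
proof (rule poly_eqI)
  fix d
  have "inj_on (heights k) (pell_strings n k)"
  proof (rule inj_onI)
    fix u v assume "u \<in> pell_strings n k" "v \<in> pell_strings n k" "heights k u = heights k v"
    then show "u = v" by (intro heights_inj[of k u v]) (simp_all add: pell_strings_eq)
  qed
  then have bij: "bij_betw (heights k) (pell_strings n k) (pell_heights k n)"
    by (simp add: bij_betw_def pell_heights_def)
  have "coeff (pell_cube_poly n k) d = int (cube_count (pell_strings n k) (pell_adj k) d)"
    by (simp add: pell_cube_poly_def coeff_cube_poly finite_pell_strings)
  also have "cube_count (pell_strings n k) (pell_adj k) d = cube_count (pell_heights k n) grid_adj d"
    using pell_adj_iff_grid_adj[OF assms]
    by (intro cube_count_iso[OF bij, symmetric]) (simp add: pell_strings_eq)
  also have "\<dots> = card {bs. box_dim bs = d \<and> box bs \<subseteq> pell_heights k n}"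
    by (rule cube_count_grid[where n = n]) (simp add: length_pell_heights)
  also have "\<dots> = card {bs \<in> pell_boxes k n. box_dim bs = d}"
    by (simp add: pell_boxes_def conj_commute)
  finally show "coeff (pell_cube_poly n k) d = coeff (box_poly (pell_boxes k n)) d"
    by (simp add: coeff_box_poly finite_pell_boxes)
qed

section \<open>The generating function\<close>

lemma fps_two_term_recurrence:
  fixes a b :: "'a :: comm_ring_1"
  assumes "P 0 = 1" "P 1 = a" "\<And>n. P (Suc (Suc n)) = a * P (Suc n) + b * P n"
  shows "Abs_fps P * (1 - fps_const a * fps_X - fps_const b * fps_X ^ 2) = 1"
proof (rule fps_ext)
  fix m
  have "Abs_fps P * (1 - fps_const a * fps_X - fps_const b * fps_X ^ 2) =
      Abs_fps P - fps_const a * (fps_X * Abs_fps P) - fps_const b * (fps_X ^ 2 * Abs_fps P)"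
    by (simp add: algebra_simps)
  then have nth: "fps_nth (Abs_fps P * (1 - fps_const a * fps_X - fps_const b * fps_X ^ 2)) m =
      P m - a * (if m = 0 then 0 else P (m - 1)) - b * (if m < 2 then 0 else P (m - 2))"
    by (simp add: fps_X_power_mult_nth)
  consider "m = 0" | "m = 1" | n where "m = Suc (Suc n)"
    by (metis One_nat_def not0_implies_Suc)
  then show "fps_nth (Abs_fps P * (1 - fps_const a * fps_X - fps_const b * fps_X ^ 2)) m =
      fps_nth 1 m"
    using nth assms(1,3) assms(2)[unfolded One_nat_def] by cases simp_all
qed

theorem proposition5p2:
  fixes k :: nat
  assumes "k \<ge> 2"
  shows "Abs_fps (\<lambda>n. pell_cube_poly n k) *
           (1 - fps_const [:int k, int k - 1:] * fps_X - fps_const [:1, 1:] * fps_X ^ 2) = 1"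
proof (rule fps_two_term_recurrence)
  have P0: "box_poly (pell_boxes k 0) = 1"
    by (simp add: pell_boxes_0 box_poly_def box_dim_def)
  show "pell_cube_poly 0 k = 1"
    unfolding pell_cube_poly_eq_box_poly[OF assms] by (rule P0)
  show "pell_cube_poly 1 k = [:int k, int k - 1:]"
    unfolding pell_cube_poly_eq_box_poly[OF assms] One_nat_def
    by (subst box_poly_pell_boxes_Suc[OF assms]) (simp add: P0)
  show "pell_cube_poly (Suc (Suc n)) k =
      [:int k, int k - 1:] * pell_cube_poly (Suc n) k + [:1, 1:] * pell_cube_poly n k" for n
    unfolding pell_cube_poly_eq_box_poly[OF assms]
    by (subst box_poly_pell_boxes_Suc[OF assms]) simp
qed

end
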